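(* Let $G=(V_G,E_G)$ be a finite graph whose automorphism group acts vertex-transitively on $V_G$. Then the worst case of the graph semi-definite program for $H$ equals $-\sqrt{W}$, where $W$ is the worst case of the graph semi-definite program for $H^2$; moreover $W=\vartheta(G)$, and both worst cases are attained at $\vec J=|V_G|^{-1/2}(1,1,\ldots,1)$.
   Context: Let $G=(V_G,E_G)$ be a finite graph; rows and columns of the matrices below are indexed by $V_G$. For a real vector $\vec J=(J_\alpha)_{\alpha\in V_G}$: - The "graph semi-definite program for $H^2$" is: maximize $\sum_{\alpha,\beta}M_{\alpha,\beta}J_\alpha J_\beta$ over real symmetric positive semi-definite matrices $M$ with $M_{\alpha,\alpha}=1$ for all $\alpha$ and $M_{\alpha,\beta}=0$ whenever $(\alpha,\beta)\in E_G$. - The "graph semi-definite program for $H$" is: minimize $(\vec J,v)=\sum_\alpha J_\alpha v_\alpha$ over real vectors $v$ and matrices $M$ satisfying the constraints above, such that the block matrix $N=\begin{pmatrix}1 & v^T\\ v & M\end{pmatrix}$ is positive semi-definite. - The worst case of the program for $H^2$ is the maximum of its optimum over all $\vec J$ with $\sum_\alpha J_\alpha^2=1$. The worst case of the program for $H$ is the minimum of its optimum over all $\vec J$ with $\sum_\alpha J_\alpha^2=1$. $\vartheta(G)$ denotes the Lovász theta function: the maximum of the sum of all entries of a real symmetric positive semi-definite matrix $B$ with $\mathrm{tr}\,B=1$ and $B_{\alpha,\beta}=0$ whenever $(\alpha,\beta)\in E_G$. *)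

theory Defs
  imports "HOL-Analysis.Analysis"
begin

definition simple_graph :: "('a \<Rightarrow> 'a \<Rightarrow> bool) \<Rightarrow> bool" where
  "simple_graph E \<longleftrightarrow> (\<forall>x y. E x y \<longrightarrow> E y x) \<and> (\<forall>x. \<not> E x x)"

definition graph_automorphism :: "('a \<Rightarrow> 'a \<Rightarrow> bool) \<Rightarrow> ('a \<Rightarrow> 'a) \<Rightarrow> bool" where
  "graph_automorphism E \<sigma> \<longleftrightarrow> bij \<sigma> \<and> (\<forall>x y. E x y \<longleftrightarrow> E (\<sigma> x) (\<sigma> y))"

definition vertex_transitive :: "('a \<Rightarrow> 'a \<Rightarrow> bool) \<Rightarrow> bool" where
  "vertex_transitive E \<longleftrightarrow> (\<forall>x y. \<exists>\<sigma>. graph_automorphism E \<sigma> \<and> \<sigma> x = y)"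

definition psd :: "('i::finite \<Rightarrow> 'i \<Rightarrow> real) \<Rightarrow> bool" where
  "psd M \<longleftrightarrow> (\<forall>i j. M i j = M j i) \<and>
     (\<forall>x :: 'i \<Rightarrow> real. 0 \<le> (\<Sum>i\<in>UNIV. \<Sum>j\<in>UNIV. x i * M i j * x j))"

definition sdp_feasible :: "('a::finite \<Rightarrow> 'a \<Rightarrow> bool) \<Rightarrow> ('a \<Rightarrow> 'a \<Rightarrow> real) \<Rightarrow> bool" where
  "sdp_feasible E M \<longleftrightarrow> psd M \<and> (\<forall>a. M a a = 1) \<and> (\<forall>a b. E a b \<longrightarrow> M a b = 0)"

text \<open>Block matrix N = [[1, v^T],[v, M]], indexed by 'a option (None = the extra first index).\<close>
definition block_matrix :: "('a \<Rightarrow> real) \<Rightarrow> ('a \<Rightarrow> 'a \<Rightarrow> real) \<Rightarrow> 'a option \<Rightarrow> 'a option \<Rightarrow> real" where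
  "block_matrix v M p q = (case (p, q) of
      (None, None) \<Rightarrow> 1
    | (None, Some b) \<Rightarrow> v b
    | (Some a, None) \<Rightarrow> v a
    | (Some a, Some b) \<Rightarrow> M a b)"

definition sdp_H2 :: "('a::finite \<Rightarrow> 'a \<Rightarrow> bool) \<Rightarrow> ('a \<Rightarrow> real) \<Rightarrow> real" where
  "sdp_H2 E J = Sup {(\<Sum>a\<in>UNIV. \<Sum>b\<in>UNIV. M a b * J a * J b) | M. sdp_feasible E M}"

definition sdp_H :: "('a::finite \<Rightarrow> 'a \<Rightarrow> bool) \<Rightarrow> ('a \<Rightarrow> real) \<Rightarrow> real" where
  "sdp_H E J = Inf {(\<Sum>a\<in>UNIV. J a * v a) | v M. sdp_feasible E M \<and> psd (block_matrix v M)}"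

definition unit_vecs :: "('a::finite \<Rightarrow> real) set" where
  "unit_vecs = {J. (\<Sum>a\<in>UNIV. (J a)\<^sup>2) = 1}"

definition worst_H2 :: "('a::finite \<Rightarrow> 'a \<Rightarrow> bool) \<Rightarrow> real" where
  "worst_H2 E = Sup (sdp_H2 E ` unit_vecs)"

definition worst_H :: "('a::finite \<Rightarrow> 'a \<Rightarrow> bool) \<Rightarrow> real" where
  "worst_H E = Inf (sdp_H E ` unit_vecs)"

definition lovasz_theta :: "('a::finite \<Rightarrow> 'a \<Rightarrow> bool) \<Rightarrow> real" where
  "lovasz_theta E = Sup {(\<Sum>a\<in>UNIV. \<Sum>b\<in>UNIV. B a b) | B.
      psd B \<and> (\<Sum>a\<in>UNIV. B a a) = 1 \<and> (\<forall>a b. E a b \<longrightarrow> B a b = 0)}"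

end

theory Submission
  imports Defs
begin

text \<open>
Any feasible \<open>M\<close> of the program for \<open>H\<^sup>2\<close> and any unit vector \<open>J\<close> give the Lovasz witness
\<open>B a b = M a b J\<^sub>a J\<^sub>b\<close> with the same objective value, so every optimum is at most \<open>\<vartheta>(G)\<close>.
Conversely, averaging a witness \<open>B\<close> over the automorphism group of a vertex-transitive graph
makes its diagonal constant, and rescaling it by \<open>|V|\<close> gives a feasible \<open>M\<close> whose value at the
uniform vector is the value of \<open>B\<close>; hence the uniform vector attains \<open>\<vartheta>(G)\<close>.
For the program for \<open>H\<close>, positive semi-definiteness of the block matrix says exactly that
\<open>(x, v)\<^sup>2 \<le> x\<^sup>T M x\<close> for all \<open>x\<close>, so \<open>(J, v) \<ge> -\<surd>(J\<^sup>T M J)\<close>, with equality for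
\<open>v = -M J / \<surd>(J\<^sup>T M J)\<close> by Cauchy-Schwarz; thus the optimum for \<open>H\<close> is \<open>-\<surd>\<close> of the optimum
for \<open>H\<^sup>2\<close> at every \<open>J\<close>.
\<close>

definition bilinear_form :: "('i::finite \<Rightarrow> 'i \<Rightarrow> real) \<Rightarrow> ('i \<Rightarrow> real) \<Rightarrow> ('i \<Rightarrow> real) \<Rightarrow> real" where
  "bilinear_form M x y = (\<Sum>i\<in>UNIV. \<Sum>j\<in>UNIV. x i * M i j * y j)"

lemma bilinear_form_combination_left:
  "bilinear_form M (\<lambda>i. x i + c * y i) z = bilinear_form M x z + c * bilinear_form M y z"
  unfolding bilinear_form_def by (simp add: algebra_simps sum.distrib sum_distrib_left)

lemma bilinear_form_combination_right:
  "bilinear_form M z (\<lambda>i. x i + c * y i) = bilinear_form M z x + c * bilinear_form M z y"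
  unfolding bilinear_form_def by (simp add: algebra_simps sum.distrib sum_distrib_left)

lemma bilinear_form_commute:
  assumes "\<And>i j. M i j = M j i"
  shows "bilinear_form M x y = bilinear_form M y x"
  unfolding bilinear_form_def by (subst sum.swap) (simp add: assms mult_ac)

lemma bilinear_form_indicator:
  "bilinear_form M (\<lambda>i. if i = a then 1 else 0) (\<lambda>j. if j = b then 1 else 0) = M a b"
proof -
  have "(if i = a then 1 else 0) * M i j * (if j = b then 1 else 0)
      = (if i = a then if j = b then M a b else 0 else 0)" for i j
    by simp
  moreover have "(\<Sum>j\<in>UNIV. if i = a then if j = b then M a b else 0 else 0)
      = (if i = a then M a b else 0)" for i
    by (cases "i = a") simp_all
  ultimately show ?thesis unfolding bilinear_form_def by simp
qed

lemma psd_symmetric: "psd M \<Longrightarrow> M i j = M j i"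
  unfolding psd_def by blast

lemma psd_bilinear_form_nonneg: "psd M \<Longrightarrow> 0 \<le> bilinear_form M x x"
  unfolding psd_def bilinear_form_def by blast

lemma psd_iff_bilinear_form:
  "psd M \<longleftrightarrow> (\<forall>i j. M i j = M j i) \<and> (\<forall>x. 0 \<le> bilinear_form M x x)"
  unfolding psd_def bilinear_form_def by blast

lemma nonneg_quadratic_discriminant:
  fixes a b c :: real
  assumes "0 \<le> c" and nonneg: "\<And>l. 0 \<le> a + 2 * l * b + l\<^sup>2 * c"
  shows "b\<^sup>2 \<le> a * c"
proof (cases "c = 0")
  case True
  have "b = 0"
  proof (rule ccontr)
    assume "b \<noteq> 0"
    then have "a + 2 * (- (a + 1) / (2 * b)) * b + (- (a + 1) / (2 * b))\<^sup>2 * c = -1"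
      using True by (simp add: field_simps)
    with nonneg[of "- (a + 1) / (2 * b)"] show False by linarith
  qed
  then show ?thesis using True by simp
next
  case False
  with \<open>0 \<le> c\<close> have "0 < c" by simp
  have "a + 2 * (- b / c) * b + (- b / c)\<^sup>2 * c = a - b\<^sup>2 / c"
    using \<open>0 < c\<close> by (simp add: field_simps power2_eq_square)
  with nonneg[of "- b / c"] have "b\<^sup>2 / c \<le> a" by linarith
  then show ?thesis using \<open>0 < c\<close> by (simp add: field_simps)
qed

lemma psd_cauchy_schwarz:
  assumes "psd M"
  shows "(bilinear_form M x y)\<^sup>2 \<le> bilinear_form M x x * bilinear_form M y y"
proof (rule nonneg_quadratic_discriminant)
  show "0 \<le> bilinear_form M y y" using assms by (rule psd_bilinear_form_nonneg)
  fix l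
  have "bilinear_form M (\<lambda>i. x i + l * y i) (\<lambda>i. x i + l * y i)
      = bilinear_form M x x + 2 * l * bilinear_form M x y + l\<^sup>2 * bilinear_form M y y"
    using bilinear_form_commute[of M y x, OF psd_symmetric[OF assms]]
    by (simp add: bilinear_form_combination_left bilinear_form_combination_right
        power2_eq_square algebra_simps)
  then show "0 \<le> bilinear_form M x x + 2 * l * bilinear_form M x y + l\<^sup>2 * bilinear_form M y y"
    using psd_bilinear_form_nonneg[OF assms] by metis
qed

lemma psd_entry_bound:
  assumes "psd B"
  shows "\<bar>B a b\<bar> \<le> (B a a + B b b) / 2"
proof -
  have diag: "0 \<le> B c c" for c
    using psd_bilinear_form_nonneg[OF assms] by (metis bilinear_form_indicator)
  have "\<bar>B a b\<bar>\<^sup>2 \<le> B a a * B b b"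
    using psd_cauchy_schwarz[OF assms] by (metis bilinear_form_indicator power2_abs)
  also have "\<dots> \<le> ((B a a + B b b) / 2)\<^sup>2"
    using sum_squares_ge_zero[of "B a a - B b b" 0] by (simp add: power2_eq_square field_simps)
  finally show ?thesis by (rule power2_le_imp_le) (simp add: diag add_nonneg_nonneg)
qed

lemma sdp_objective_eq_bilinear_form:
  "(\<Sum>a\<in>UNIV. \<Sum>b\<in>UNIV. M a b * J a * J b) = bilinear_form M J J"
  unfolding bilinear_form_def by (simp add: mult_ac)

lemma sdp_feasible_entry_bound:
  assumes "sdp_feasible E M"
  shows "\<bar>M a b\<bar> \<le> 1"
  using psd_entry_bound[of M a b] assms unfolding sdp_feasible_def by simp

lemma psd_identity: "psd (\<lambda>a b::'i::finite. if a = b then 1 else 0)"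
  unfolding psd_def
proof (intro conjI allI)
  fix x :: "'i \<Rightarrow> real"
  have "x i * (if i = j then 1 else 0) * x j = (if i = j then (x i)\<^sup>2 else 0)" for i j
    by (simp add: power2_eq_square)
  then show "0 \<le> (\<Sum>i\<in>UNIV. \<Sum>j\<in>UNIV. x i * (if i = j then 1 else 0) * x j)"
    by (simp add: sum_nonneg)
qed simp

lemma identity_sdp_feasible:
  assumes "irreflp E"
  shows "sdp_feasible E (\<lambda>a b. if a = b then 1 else 0)"
  using psd_identity assms unfolding sdp_feasible_def irreflp_def by metis

lemma sdp_H2_values_bdd_above:
  "bdd_above {(\<Sum>a\<in>UNIV. \<Sum>b\<in>UNIV. M a b * J a * J b) | M. sdp_feasible E M}"
proof (rule bdd_aboveI)
  fix t
  assume "t \<in> {(\<Sum>a\<in>UNIV. \<Sum>b\<in>UNIV. M a b * J a * J b) | M. sdp_feasible E M}"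
  then obtain M where M: "sdp_feasible E M" and t: "t = (\<Sum>a\<in>UNIV. \<Sum>b\<in>UNIV. M a b * J a * J b)"
    by blast
  have "M a b * J a * J b \<le> \<bar>J a\<bar> * \<bar>J b\<bar>" for a b
  proof -
    have "M a b * J a * J b \<le> \<bar>M a b\<bar> * (\<bar>J a\<bar> * \<bar>J b\<bar>)"
      by (metis abs_ge_self abs_mult mult.assoc)
    also have "\<dots> \<le> \<bar>J a\<bar> * \<bar>J b\<bar>"
      using sdp_feasible_entry_bound[OF M] by (simp add: mult_left_le_one_le)
    finally show ?thesis .
  qed
  then show "t \<le> (\<Sum>a\<in>UNIV. \<Sum>b\<in>UNIV. \<bar>J a\<bar> * \<bar>J b\<bar>)"
    unfolding t by (intro sum_mono)
qed

lemma sdp_objective_le_sdp_H2: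
  "sdp_feasible E M \<Longrightarrow> (\<Sum>a\<in>UNIV. \<Sum>b\<in>UNIV. M a b * J a * J b) \<le> sdp_H2 E J"
  unfolding sdp_H2_def by (rule cSup_upper[OF _ sdp_H2_values_bdd_above]) blast

lemma lovasz_theta_value_le_card:
  fixes B :: "'a::finite \<Rightarrow> 'a \<Rightarrow> real"
  assumes "psd B" and "(\<Sum>a\<in>UNIV. B a a) = 1"
  shows "(\<Sum>a\<in>UNIV. \<Sum>b\<in>UNIV. B a b) \<le> real CARD('a)"
proof -
  have "(\<Sum>a\<in>UNIV. \<Sum>b\<in>UNIV. B a b) \<le> (\<Sum>a\<in>UNIV. \<Sum>b\<in>UNIV. (B a a + B b b) / 2)"
    using psd_entry_bound[OF assms(1)] by (intro sum_mono) (metis abs_le_D1)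
  also have "\<dots> = real CARD('a)"
    using assms(2) by (simp add: add_divide_distrib sum.distrib sum_divide_distrib[symmetric]
        sum_distrib_left[symmetric])
  finally show ?thesis .
qed

lemma lovasz_theta_witness_of_sdp_feasible:
  assumes "sdp_feasible E M" and "(\<Sum>a\<in>UNIV. (J a)\<^sup>2) = 1"
  shows "psd (\<lambda>a b. M a b * J a * J b)" and "(\<Sum>a\<in>UNIV. M a a * J a * J a) = 1"
    and "\<forall>a b. E a b \<longrightarrow> M a b * J a * J b = 0"
proof -
  have psd: "psd M" and diag: "\<And>a. M a a = 1" and edge: "\<And>a b. E a b \<Longrightarrow> M a b = 0"
    using assms(1) unfolding sdp_feasible_def by auto
  show "psd (\<lambda>a b. M a b * J a * J b)"
    unfolding psd_def
  proof (intro conjI allI)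
    fix i j
    show "M i j * J i * J j = M j i * J j * J i" by (simp add: psd_symmetric[OF psd] mult_ac)
  next
    fix x :: "'a \<Rightarrow> real"
    have "0 \<le> bilinear_form M (\<lambda>i. x i * J i) (\<lambda>i. x i * J i)"
      by (rule psd_bilinear_form_nonneg[OF psd])
    then show "0 \<le> (\<Sum>i\<in>UNIV. \<Sum>j\<in>UNIV. x i * (M i j * J i * J j) * x j)"
      unfolding bilinear_form_def by (simp add: mult_ac)
  qed
  show "(\<Sum>a\<in>UNIV. M a a * J a * J a) = 1" using assms(2) by (simp add: diag power2_eq_square)
  show "\<forall>a b. E a b \<longrightarrow> M a b * J a * J b = 0" by (simp add: edge)
qed

lemma sdp_H2_le_lovasz_theta:
  assumes "irreflp E" and "J \<in> unit_vecs"
  shows "sdp_H2 E J \<le> lovasz_theta E"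
  unfolding sdp_H2_def
proof (rule cSup_least)
  show "{\<Sum>a\<in>UNIV. \<Sum>b\<in>UNIV. M a b * J a * J b | M. sdp_feasible E M} \<noteq> {}"
    using identity_sdp_feasible[OF assms(1)] by blast
  have theta_bdd: "bdd_above {(\<Sum>a\<in>UNIV. \<Sum>b\<in>UNIV. B a b) | B :: 'a \<Rightarrow> 'a \<Rightarrow> real.
      psd B \<and> (\<Sum>a\<in>UNIV. B a a) = 1 \<and> (\<forall>a b. E a b \<longrightarrow> B a b = 0)}"
    using lovasz_theta_value_le_card by (intro bdd_aboveI[where M = "real CARD('a)"]) blast
  fix t
  assume "t \<in> {\<Sum>a\<in>UNIV. \<Sum>b\<in>UNIV. M a b * J a * J b | M. sdp_feasible E M}"
  then obtain M where M: "sdp_feasible E M"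
    and t: "t = (\<Sum>a\<in>UNIV. \<Sum>b\<in>UNIV. M a b * J a * J b)"
    by blast
  have J: "(\<Sum>a\<in>UNIV. (J a)\<^sup>2) = 1" using assms(2) unfolding unit_vecs_def by simp
  have "t \<in> {(\<Sum>a\<in>UNIV. \<Sum>b\<in>UNIV. B a b) | B :: 'a \<Rightarrow> 'a \<Rightarrow> real.
      psd B \<and> (\<Sum>a\<in>UNIV. B a a) = 1 \<and> (\<forall>a b. E a b \<longrightarrow> B a b = 0)}"
    using lovasz_theta_witness_of_sdp_feasible[OF M J] unfolding t
    by (intro CollectI exI[of _ "\<lambda>a b. M a b * J a * J b"]) simp
  then show "t \<le> lovasz_theta E"
    unfolding lovasz_theta_def by (rule cSup_upper[OF _ theta_bdd])
qed

lemma sum_comp_bij: "bij s \<Longrightarrow> (\<Sum>i\<in>UNIV. f (s i)) = (\<Sum>i\<in>UNIV. f i)"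
  using sum.reindex_bij_betw[of s UNIV UNIV f] by simp

lemma double_sum_comp_bij:
  "bij s \<Longrightarrow> (\<Sum>i\<in>UNIV. \<Sum>j\<in>UNIV. f (s i) (s j)) = (\<Sum>i\<in>UNIV. \<Sum>j\<in>UNIV. f i j)"
proof -
  assume "bij s"
  have "(\<Sum>i\<in>UNIV. \<Sum>j\<in>UNIV. f (s i) (s j)) = (\<Sum>i\<in>UNIV. \<Sum>j\<in>UNIV. f i (s j))"
    by (rule sum_comp_bij[OF \<open>bij s\<close>, of "\<lambda>i. \<Sum>j\<in>UNIV. f i (s j)"])
  also have "\<dots> = (\<Sum>i\<in>UNIV. \<Sum>j\<in>UNIV. f i j)"
    by (rule sum.cong[OF refl]) (rule sum_comp_bij[OF \<open>bij s\<close>])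
  finally show ?thesis .
qed

lemma psd_comp_bij:
  fixes B :: "'b::finite \<Rightarrow> 'b \<Rightarrow> real" and s :: "'a::finite \<Rightarrow> 'b"
  assumes "psd B" and "bij s"
  shows "psd (\<lambda>i j. B (s i) (s j))"
  unfolding psd_def
proof (intro conjI allI)
  fix x :: "'a \<Rightarrow> real"
  define y where "y = x \<circ> inv s"
  have x: "x i = y (s i)" for i
    using assms(2) by (simp add: y_def bij_is_inj)
  have "(\<Sum>i\<in>UNIV. \<Sum>j\<in>UNIV. x i * B (s i) (s j) * x j) = (\<Sum>i\<in>UNIV. \<Sum>j\<in>UNIV. y i * B i j * y j)"
    unfolding x by (rule double_sum_comp_bij[OF assms(2), of "\<lambda>i j. y i * B i j * y j"])
  then show "0 \<le> (\<Sum>i\<in>UNIV. \<Sum>j\<in>UNIV. x i * B (s i) (s j) * x j)"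
    using assms(1) unfolding psd_def by simp
qed (simp add: psd_symmetric[OF assms(1)])

lemma psd_sum:
  assumes "\<And>s. s \<in> S \<Longrightarrow> psd (B s)"
  shows "psd (\<lambda>i j. \<Sum>s\<in>S. B s i j)"
  unfolding psd_iff_bilinear_form
proof (intro conjI allI)
  fix x
  have "bilinear_form (\<lambda>i j. \<Sum>s\<in>S. B s i j) x x = (\<Sum>s\<in>S. bilinear_form (B s) x x)"
    unfolding bilinear_form_def
    by (simp add: sum_distrib_left sum_distrib_right sum.swap[of _ S] mult_ac)
  then show "0 \<le> bilinear_form (\<lambda>i j. \<Sum>s\<in>S. B s i j) x x"
    using assms by (simp add: sum_nonneg psd_bilinear_form_nonneg)
qed (simp add: assms psd_symmetric)

lemma psd_scale:
  assumes "0 \<le> c" and "psd B"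
  shows "psd (\<lambda>i j. c * B i j)"
  unfolding psd_iff_bilinear_form
proof (intro conjI allI)
  fix x
  have "bilinear_form (\<lambda>i j. c * B i j) x x = c * bilinear_form B x x"
    unfolding bilinear_form_def by (simp add: sum_distrib_left mult_ac)
  then show "0 \<le> bilinear_form (\<lambda>i j. c * B i j) x x"
    by (simp add: assms psd_bilinear_form_nonneg)
qed (simp add: assms psd_symmetric)

lemma graph_automorphism_bij: "graph_automorphism E s \<Longrightarrow> bij s"
  unfolding graph_automorphism_def by blast

lemma graph_automorphism_id: "graph_automorphism E id"
  unfolding graph_automorphism_def by simp

lemma graph_automorphism_comp:
  "graph_automorphism E s \<Longrightarrow> graph_automorphism E t \<Longrightarrow> graph_automorphism E (s \<circ> t)"
  unfolding graph_automorphism_def by (auto intro: bij_comp)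

lemma graph_automorphism_inv:
  assumes "graph_automorphism E s"
  shows "graph_automorphism E (inv s)"
proof -
  have "bij s" using assms by (rule graph_automorphism_bij)
  then have "E x y \<longleftrightarrow> E (inv s x) (inv s y)" for x y
    using assms unfolding graph_automorphism_def by (metis bij_inv_eq_iff)
  then show ?thesis unfolding graph_automorphism_def using \<open>bij s\<close> bij_imp_bij_inv by blast
qed

lemma bij_betw_graph_automorphisms_comp:
  assumes "graph_automorphism E t"
  shows "bij_betw (\<lambda>s. s \<circ> t) {s. graph_automorphism E s} {s. graph_automorphism E s}"
proof (rule bij_betw_byWitness[where f' = "\<lambda>s. s \<circ> inv t"])
  have "bij t" using assms by (rule graph_automorphism_bij)
  then have "t \<circ> inv t = id" and "inv t \<circ> t = id"
    by (simp_all add: surj_iff[symmetric] inj_iff[symmetric] bij_is_surj bij_is_inj)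
  then show "\<forall>s\<in>{s. graph_automorphism E s}. s \<circ> t \<circ> inv t = s"
    and "\<forall>s\<in>{s. graph_automorphism E s}. s \<circ> inv t \<circ> t = s"
    by (simp_all add: comp_assoc)
  show "(\<lambda>s. s \<circ> t) ` {s. graph_automorphism E s} \<subseteq> {s. graph_automorphism E s}"
    using assms graph_automorphism_comp by blast
  show "(\<lambda>s. s \<circ> inv t) ` {s. graph_automorphism E s} \<subseteq> {s. graph_automorphism E s}"
    using graph_automorphism_inv[OF assms] graph_automorphism_comp by blast
qed

definition automorphism_average :: "('a::finite \<Rightarrow> 'a \<Rightarrow> bool) \<Rightarrow> ('a \<Rightarrow> 'a \<Rightarrow> real) \<Rightarrow> 'a \<Rightarrow> 'a \<Rightarrow> real" where
  "automorphism_average E B a b =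
     (\<Sum>s | graph_automorphism E s. B (s a) (s b)) / card {s. graph_automorphism E s}"

lemma automorphism_average_comp:
  assumes "graph_automorphism E t"
  shows "automorphism_average E B (t a) (t b) = automorphism_average E B a b"
  using sum.reindex_bij_betw[OF bij_betw_graph_automorphisms_comp[OF assms], of "\<lambda>s. B (s a) (s b)"]
  unfolding automorphism_average_def by simp

lemma psd_automorphism_average:
  assumes "psd B"
  shows "psd (automorphism_average E B)"
proof -
  have "psd (\<lambda>a b. inverse (card {s. graph_automorphism E s}) *
      (\<Sum>s | graph_automorphism E s. B (s a) (s b)))"
  proof (rule psd_scale)
    show "psd (\<lambda>a b. \<Sum>s | graph_automorphism E s. B (s a) (s b))"
      by (rule psd_sum, rule psd_comp_bij[OF assms]) (simp add: graph_automorphism_bij)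
  qed simp
  moreover have "automorphism_average E B = (\<lambda>a b. inverse (card {s. graph_automorphism E s}) *
      (\<Sum>s | graph_automorphism E s. B (s a) (s b)))"
    unfolding automorphism_average_def by (simp add: field_simps)
  ultimately show ?thesis by simp
qed

lemma automorphism_average_edge:
  assumes "\<forall>a b. E a b \<longrightarrow> B a b = 0" and "E a b"
  shows "automorphism_average E B a b = 0"
  using assms unfolding automorphism_average_def graph_automorphism_def by simp

lemma sum_automorphism_average:
  "(\<Sum>a\<in>UNIV. \<Sum>b\<in>UNIV. automorphism_average E B a b) = (\<Sum>a\<in>UNIV. \<Sum>b\<in>UNIV. B a b)"
proof -
  let ?A = "{s. graph_automorphism E s}"
  have "(\<Sum>a\<in>UNIV. \<Sum>b\<in>UNIV. automorphism_average E B a b)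
      = (\<Sum>s\<in>?A. \<Sum>a\<in>UNIV. \<Sum>b\<in>UNIV. B (s a) (s b)) / card ?A"
    unfolding automorphism_average_def
    by (simp add: sum_divide_distrib[symmetric] sum.swap[of _ ?A])
  also have "\<dots> = (\<Sum>s\<in>?A. \<Sum>a\<in>UNIV. \<Sum>b\<in>UNIV. B a b) / card ?A"
    by (simp add: double_sum_comp_bij graph_automorphism_bij)
  also have "\<dots> = (\<Sum>a\<in>UNIV. \<Sum>b\<in>UNIV. B a b)"
    using graph_automorphism_id[of E] by auto
  finally show ?thesis .
qed

lemma trace_automorphism_average:
  "(\<Sum>a\<in>UNIV. automorphism_average E B a a) = (\<Sum>a\<in>UNIV. B a a)"
proof -
  let ?A = "{s. graph_automorphism E s}"
  have "(\<Sum>a\<in>UNIV. automorphism_average E B a a) = (\<Sum>s\<in>?A. \<Sum>a\<in>UNIV. B (s a) (s a)) / card ?A"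
    unfolding automorphism_average_def by (simp add: sum_divide_distrib[symmetric] sum.swap[of _ ?A])
  also have "\<dots> = (\<Sum>s\<in>?A. \<Sum>a\<in>UNIV. B a a) / card ?A"
    by (simp add: sum_comp_bij[of _ "\<lambda>a. B a a"] graph_automorphism_bij)
  also have "\<dots> = (\<Sum>a\<in>UNIV. B a a)"
    using graph_automorphism_id[of E] by auto
  finally show ?thesis .
qed

lemma automorphism_average_diagonal:
  fixes E :: "'a::finite \<Rightarrow> 'a \<Rightarrow> bool"
  assumes "vertex_transitive E"
  shows "automorphism_average E B a a = (\<Sum>c\<in>UNIV. B c c) / CARD('a)"
proof -
  have diagonal_constant: "automorphism_average E B c c = automorphism_average E B a a" for c
  proof -
    obtain t where "graph_automorphism E t" and "t a = c"
      using assms unfolding vertex_transitive_def by blast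
    then show ?thesis using automorphism_average_comp[of E t B a a] by simp
  qed
  have "(\<Sum>c\<in>UNIV. B c c) = (\<Sum>c\<in>UNIV. automorphism_average E B c c)"
    by (rule trace_automorphism_average[symmetric])
  also have "\<dots> = (\<Sum>c\<in>(UNIV :: 'a set). automorphism_average E B a a)"
    by (intro sum.cong refl diagonal_constant)
  also have "\<dots> = CARD('a) * automorphism_average E B a a"
    by simp
  finally show ?thesis by simp
qed

lemma sdp_feasible_of_lovasz_theta_witness:
  fixes E :: "'a::finite \<Rightarrow> 'a \<Rightarrow> bool"
  assumes "vertex_transitive E" and "psd B" and "(\<Sum>a\<in>UNIV. B a a) = 1"
    and "\<forall>a b. E a b \<longrightarrow> B a b = 0"
  shows "sdp_feasible E (\<lambda>a b. CARD('a) * automorphism_average E B a b)"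
  unfolding sdp_feasible_def
proof (intro conjI allI impI)
  show "psd (\<lambda>a b. CARD('a) * automorphism_average E B a b)"
    by (rule psd_scale[OF _ psd_automorphism_average[OF assms(2)]]) simp
  fix a
  show "CARD('a) * automorphism_average E B a a = 1"
    by (simp add: automorphism_average_diagonal[OF assms(1)] assms(3))
  fix b
  assume "E a b"
  then show "CARD('a) * automorphism_average E B a b = 0"
    by (simp add: automorphism_average_edge[OF assms(4)])
qed

lemma uniform_in_unit_vecs: "(\<lambda>_::'a::finite. 1 / sqrt (real CARD('a))) \<in> unit_vecs"
  unfolding unit_vecs_def by (simp add: power_divide)

lemma sdp_H2_uniform_eq_lovasz_theta:
  fixes E :: "'a::finite \<Rightarrow> 'a \<Rightarrow> bool"
  assumes "vertex_transitive E"
  shows "sdp_H2 E (\<lambda>_. 1 / sqrt (real CARD('a))) = lovasz_theta E"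
proof -
  let ?u = "\<lambda>_::'a. 1 / sqrt (real CARD('a))"
  have uniform_objective: "(\<Sum>a\<in>UNIV. \<Sum>b\<in>UNIV. M a b * ?u a * ?u b) = (\<Sum>a\<in>UNIV. \<Sum>b\<in>UNIV. M a b) / CARD('a)"
    for M :: "'a \<Rightarrow> 'a \<Rightarrow> real"
    by (simp add: sum_divide_distrib)
  have unit: "(\<Sum>a\<in>UNIV. (?u a)\<^sup>2) = 1"
    using uniform_in_unit_vecs unfolding unit_vecs_def by simp
  have "{(\<Sum>a\<in>UNIV. \<Sum>b\<in>UNIV. M a b * ?u a * ?u b) | M. sdp_feasible E M}
      = {(\<Sum>a\<in>UNIV. \<Sum>b\<in>UNIV. B a b) | B.
          psd B \<and> (\<Sum>a\<in>UNIV. B a a) = 1 \<and> (\<forall>a b. E a b \<longrightarrow> B a b = 0)}"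
  proof (intro equalityI subsetI)
    fix t
    assume "t \<in> {(\<Sum>a\<in>UNIV. \<Sum>b\<in>UNIV. M a b * ?u a * ?u b) | M. sdp_feasible E M}"
    then obtain M where M: "sdp_feasible E M"
      and t: "t = (\<Sum>a\<in>UNIV. \<Sum>b\<in>UNIV. M a b * ?u a * ?u b)"
      by blast
    show "t \<in> {(\<Sum>a\<in>UNIV. \<Sum>b\<in>UNIV. B a b) | B.
        psd B \<and> (\<Sum>a\<in>UNIV. B a a) = 1 \<and> (\<forall>a b. E a b \<longrightarrow> B a b = 0)}"
      using lovasz_theta_witness_of_sdp_feasible[OF M unit] unfolding t
      by (intro CollectI exI[of _ "\<lambda>a b. M a b * ?u a * ?u b"]) simp
  next
    fix t
    assume "t \<in> {(\<Sum>a\<in>UNIV. \<Sum>b\<in>UNIV. B a b) | B.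
        psd B \<and> (\<Sum>a\<in>UNIV. B a a) = 1 \<and> (\<forall>a b. E a b \<longrightarrow> B a b = 0)}"
    then obtain B where B: "psd B" "(\<Sum>a\<in>UNIV. B a a) = 1" "\<forall>a b. E a b \<longrightarrow> B a b = 0"
      and t: "t = (\<Sum>a\<in>UNIV. \<Sum>b\<in>UNIV. B a b)"
      by blast
    let ?M = "\<lambda>a b. CARD('a) * automorphism_average E B a b"
    have "t = (\<Sum>a\<in>UNIV. \<Sum>b\<in>UNIV. ?M a b * ?u a * ?u b)"
      unfolding uniform_objective t by (simp add: sum_distrib_left[symmetric] sum_automorphism_average)
    then show "t \<in> {(\<Sum>a\<in>UNIV. \<Sum>b\<in>UNIV. M a b * ?u a * ?u b) | M. sdp_feasible E M}"
      using sdp_feasible_of_lovasz_theta_witness[OF assms B] by (intro CollectI exI[of _ ?M]) simp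
  qed
  then show ?thesis unfolding sdp_H2_def lovasz_theta_def by simp
qed

lemma sum_UNIV_option:
  "(\<Sum>p\<in>(UNIV::'a::finite option set). f p) = f None + (\<Sum>a\<in>UNIV. f (Some a))"
  by (simp add: UNIV_option_conv sum.reindex)

lemma block_matrix_quadratic_form:
  "(\<Sum>p\<in>UNIV. \<Sum>q\<in>UNIV. y p * block_matrix v M p q * y q)
   = (y None)\<^sup>2 + 2 * y None * (\<Sum>a\<in>UNIV. y (Some a) * v a)
     + bilinear_form M (\<lambda>a. y (Some a)) (\<lambda>a. y (Some a))"
  by (simp add: sum_UNIV_option block_matrix_def bilinear_form_def power2_eq_square
      algebra_simps sum.distrib sum_distrib_left sum_distrib_right)

text \<open>Schur complement for the block matrix \<open>[[1, v\<^sup>T], [v, M]]\<close>.\<close>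
lemma psd_block_matrix_iff:
  assumes "psd M"
  shows "psd (block_matrix v M) \<longleftrightarrow> (\<forall>x. (\<Sum>a\<in>UNIV. x a * v a)\<^sup>2 \<le> bilinear_form M x x)"
proof (intro iffI allI)
  fix x
  assume "psd (block_matrix v M)"
  define w where "w = (\<Sum>a\<in>UNIV. x a * v a)"
  have "0 \<le> (\<Sum>p\<in>UNIV. \<Sum>q\<in>UNIV. (case p of None \<Rightarrow> - w | Some a \<Rightarrow> x a) *
      block_matrix v M p q * (case q of None \<Rightarrow> - w | Some a \<Rightarrow> x a))"
    using \<open>psd (block_matrix v M)\<close> unfolding psd_def by blast
  also have "\<dots> = bilinear_form M x x - w\<^sup>2"
    by (simp add: block_matrix_quadratic_form w_def power2_eq_square)
  finally show "(\<Sum>a\<in>UNIV. x a * v a)\<^sup>2 \<le> bilinear_form M x x"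
    by (simp add: w_def)
next
  assume bound: "\<forall>x. (\<Sum>a\<in>UNIV. x a * v a)\<^sup>2 \<le> bilinear_form M x x"
  show "psd (block_matrix v M)"
    unfolding psd_def
  proof (intro conjI allI)
    fix p q
    show "block_matrix v M p q = block_matrix v M q p"
      using psd_symmetric[OF assms] unfolding block_matrix_def by (simp split: option.split)
  next
    fix y :: "'a option \<Rightarrow> real"
    define w where "w = (\<Sum>a\<in>UNIV. y (Some a) * v a)"
    have "(\<Sum>p\<in>UNIV. \<Sum>q\<in>UNIV. y p * block_matrix v M p q * y q)
        = (y None + w)\<^sup>2 + (bilinear_form M (\<lambda>a. y (Some a)) (\<lambda>a. y (Some a)) - w\<^sup>2)"
      unfolding block_matrix_quadratic_form w_def by (simp add: power2_eq_square algebra_simps)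
    also have "\<dots> \<ge> 0"
      using bound unfolding w_def by (simp add: add_nonneg_nonneg)
    finally show "0 \<le> (\<Sum>p\<in>UNIV. \<Sum>q\<in>UNIV. y p * block_matrix v M p q * y q)" .
  qed
qed

text \<open>The optimal \<open>v = -M J / \<surd>(J\<^sup>T M J)\<close>, with \<open>v = 0\<close> when \<open>J\<^sup>T M J = 0\<close> since \<open>x / 0 = 0\<close>.\<close>
lemma psd_block_matrix_attains_neg_sqrt:
  assumes "psd M"
  shows "\<exists>v. psd (block_matrix v M) \<and> (\<Sum>a\<in>UNIV. J a * v a) = - sqrt (bilinear_form M J J)"
proof -
  let ?t = "bilinear_form M J J"
  define v where "v a = - (\<Sum>b\<in>UNIV. M a b * J b) / sqrt ?t" for a
  have t: "0 \<le> ?t" using assms by (rule psd_bilinear_form_nonneg)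
  have xv: "(\<Sum>a\<in>UNIV. x a * v a) = - bilinear_form M x J / sqrt ?t" for x
    unfolding v_def bilinear_form_def by (simp add: sum_distrib_left sum_divide_distrib sum_negf mult_ac)
  have "(\<Sum>a\<in>UNIV. x a * v a)\<^sup>2 \<le> bilinear_form M x x" for x
  proof -
    have "(\<Sum>a\<in>UNIV. x a * v a)\<^sup>2 * ?t \<le> (bilinear_form M x J)\<^sup>2"
      using t by (simp add: xv power_divide)
    also have "\<dots> \<le> bilinear_form M x x * ?t"
      by (rule psd_cauchy_schwarz[OF assms])
    finally show ?thesis
      using t xv psd_bilinear_form_nonneg[OF assms, of x]
      by (cases "?t = 0") (simp_all add: mult_le_cancel_right)
  qed
  moreover have "(\<Sum>a\<in>UNIV. J a * v a) = - sqrt ?t"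
    using t by (simp add: xv real_div_sqrt)
  ultimately show ?thesis
    using psd_block_matrix_iff[OF assms] by blast
qed

lemma sdp_H_value_lower_bound:
  assumes "h \<in> {\<Sum>a\<in>UNIV. J a * v a | v M. sdp_feasible E M \<and> psd (block_matrix v M)}"
  shows "- sqrt (sdp_H2 E J) \<le> h"
proof -
  obtain v M where M: "sdp_feasible E M" and block: "psd (block_matrix v M)"
    and h: "h = (\<Sum>a\<in>UNIV. J a * v a)"
    using assms by blast
  have psd: "psd M" using M unfolding sdp_feasible_def by blast
  have "(- h)\<^sup>2 \<le> bilinear_form M J J"
    using block psd_block_matrix_iff[OF psd] unfolding h by simp
  also have "\<dots> \<le> sdp_H2 E J"
    using sdp_objective_le_sdp_H2[OF M] by (simp add: sdp_objective_eq_bilinear_form)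
  finally have "- h \<le> sqrt (sdp_H2 E J)" by (rule real_le_rsqrt)
  then show ?thesis by simp
qed

lemma sdp_H_value_attained:
  assumes "sdp_feasible E M"
  shows "- sqrt (\<Sum>a\<in>UNIV. \<Sum>b\<in>UNIV. M a b * J a * J b)
    \<in> {\<Sum>a\<in>UNIV. J a * v a | v M. sdp_feasible E M \<and> psd (block_matrix v M)}"
proof -
  have "psd M" using assms unfolding sdp_feasible_def by blast
  then obtain v where block: "psd (block_matrix v M)"
    and objective: "(\<Sum>a\<in>UNIV. J a * v a) = - sqrt (bilinear_form M J J)"
    using psd_block_matrix_attains_neg_sqrt by blast
  show ?thesis
    unfolding sdp_objective_eq_bilinear_form objective[symmetric]
    using assms block by blast
qed

lemma sdp_H_eq_neg_sqrt_sdp_H2: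
  fixes E :: "'a::finite \<Rightarrow> 'a \<Rightarrow> bool"
  assumes "irreflp E"
  shows "sdp_H E J = - sqrt (sdp_H2 E J)"
proof -
  let ?V = "{\<Sum>a\<in>UNIV. J a * v a | v M. sdp_feasible E M \<and> psd (block_matrix v M)}"
  let ?W = "{\<Sum>a\<in>UNIV. \<Sum>b\<in>UNIV. M a b * J a * J b | M. sdp_feasible E M}"
  have feasible: "sdp_feasible E (\<lambda>a b. if a = b then 1 else 0)"
    using assms by (rule identity_sdp_feasible)
  then have W_ne: "?W \<noteq> {}" by blast
  have V_ne: "?V \<noteq> {}" using sdp_H_value_attained[OF feasible] by blast
  have V_bdd: "bdd_below ?V" using sdp_H_value_lower_bound by (intro bdd_belowI) blast
  have W_nonneg: "0 \<le> t" if "t \<in> ?W" for t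
    using that psd_bilinear_form_nonneg unfolding sdp_feasible_def
    by (auto simp: sdp_objective_eq_bilinear_form)
  have upper: "sdp_H E J \<le> - sqrt t" if "t \<in> ?W" for t
    using that sdp_H_value_attained unfolding sdp_H_def by (blast intro: cInf_lower[OF _ V_bdd])
  have "sdp_H E J \<le> 0"
    using upper W_nonneg W_ne by (meson ex_in_conv neg_le_0_iff_le order_trans real_sqrt_ge_zero)
  have "sdp_H2 E J \<le> (sdp_H E J)\<^sup>2"
    unfolding sdp_H2_def
  proof (rule cSup_least[OF W_ne])
    fix t
    assume "t \<in> ?W"
    then have "sqrt t \<le> - sdp_H E J" using upper by fastforce
    then have "(sqrt t)\<^sup>2 \<le> (- sdp_H E J)\<^sup>2"
      using W_nonneg[OF \<open>t \<in> ?W\<close>] by (intro power_mono) auto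
    with W_nonneg[OF \<open>t \<in> ?W\<close>] show "t \<le> (sdp_H E J)\<^sup>2" by simp
  qed
  then have "sqrt (sdp_H2 E J) \<le> - sdp_H E J"
    using \<open>sdp_H E J \<le> 0\<close> real_sqrt_le_mono by fastforce
  moreover have "- sqrt (sdp_H2 E J) \<le> sdp_H E J"
    unfolding sdp_H_def using V_ne sdp_H_value_lower_bound by (blast intro: cInf_greatest)
  ultimately show ?thesis by linarith
qed

theorem mainTheorem1:
  fixes E :: "'a::finite \<Rightarrow> 'a \<Rightarrow> bool"
  assumes "simple_graph E"
    and "vertex_transitive E"
  shows "worst_H E = - sqrt (worst_H2 E)
    \<and> worst_H2 E = lovasz_theta E
    \<and> sdp_H2 E (\<lambda>_. 1 / sqrt (real CARD('a))) = worst_H2 E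
    \<and> sdp_H E (\<lambda>_. 1 / sqrt (real CARD('a))) = worst_H E"
proof -
  let ?u = "\<lambda>_::'a. 1 / sqrt (real CARD('a))"
  have irreflexive: "irreflp E" using assms(1) unfolding simple_graph_def irreflp_def by blast
  have unit: "?u \<in> unit_vecs" by (rule uniform_in_unit_vecs)
  have uniform: "sdp_H2 E ?u = lovasz_theta E"
    using assms(2) by (rule sdp_H2_uniform_eq_lovasz_theta)
  note sdp_H = sdp_H_eq_neg_sqrt_sdp_H2[OF irreflexive]
  note bound = sdp_H2_le_lovasz_theta[OF irreflexive]
  have worst_H2: "worst_H2 E = lovasz_theta E"
    unfolding worst_H2_def
  proof (rule cSup_eq_maximum)
    show "lovasz_theta E \<in> sdp_H2 E ` unit_vecs" using unit uniform by (metis image_eqI)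
  qed (use bound in blast)
  have worst_H: "worst_H E = - sqrt (lovasz_theta E)"
    unfolding worst_H_def
  proof (rule cInf_eq_minimum)
    show "- sqrt (lovasz_theta E) \<in> sdp_H E ` unit_vecs"
      using unit uniform sdp_H by (metis image_eqI)
  qed (use bound sdp_H real_sqrt_le_mono in fastforce)
  show ?thesis
    using worst_H2 worst_H uniform sdp_H_eq_neg_sqrt_sdp_H2[OF irreflexive] by simp
qed

end
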